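(* Let $A\in\mathbb{R}^{N\times N}$ be symmetric positive semidefinite with smallest eigenvalue $\omega\ge 0$, let $f:[0,T]\to\mathbb{R}^N$ be continuous, and let $y^0,v^0\in\mathbb{R}^N$ and $\varepsilon>0$. Let $y$ be the solution of $$y'(t)=-Ay(t)+f(t),\qquad y(0)=y^0,\qquad 0\le t\le T,$$ and let $\tilde y$ be the solution of the hyperbolic model (HM) approximation $$\tilde y'(t)+\varepsilon\tilde y''(t)=-A\tilde y(t)+f(t),\qquad \tilde y(0)=y^0,\ \tilde y'(0)=v^0,\qquad 0\le t\le T.$$ Let $\|\cdot\|$ be a vector norm on $\mathbb{R}^N$, also denoting the induced operator norm, and let $C$ be a constant such that $\|e^{-tA}\|\le Ce^{-\omega t}$ for all $t\ge 0$. Then the HM error $\tilde e(t)=y(t)-\tilde y(t)$ satisfies, for all $t\in[0,T]$, $$\|\tilde e(t)\|\le C\varepsilon\, t\,\varphi(-\omega t)\max_{s\in[0,t]}\|\tilde y''(s)\|,$$ that is, $\|\tilde e(t)\|\le C\varepsilon t\max_{s\in[0,t]}\|\tilde y''(s)\|$ if $\omega=0$ and $\|\tilde e(t)\|\le C\varepsilon\frac{1-e^{-\omega t}}{\omega}\max_{s\in[0,t]}\|\tilde y''(s)\|$ if $\omega>0$.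
   Context: $\varphi(z)=(e^z-1)/z$ for $z\in\mathbb{C}\setminus\{0\}$ and $\varphi(0)=1$. $e^{-tA}$ denotes the matrix exponential. For the spectral norm (induced by the Euclidean norm) one may take $C=1$. *)

theory Defs
  imports "HOL-Analysis.Analysis"
begin

primrec mat_pow :: "real^'n^'n \<Rightarrow> nat \<Rightarrow> real^'n^'n" where
  "mat_pow A 0 = mat 1"
| "mat_pow A (Suc k) = A ** mat_pow A k"

definition mat_exp :: "real^'n^'n \<Rightarrow> real^'n^'n" where
  "mat_exp A = (\<Sum>k. (1 / fact k) *\<^sub>R mat_pow A k)"

definition phi :: "real \<Rightarrow> real" where
  "phi z = (if z = 0 then 1 else (exp z - 1) / z)"

definition mat_eigenvalues :: "real^'n^'n \<Rightarrow> real set" where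
  "mat_eigenvalues A = {l. \<exists>x. x \<noteq> 0 \<and> A *v x = l *\<^sub>R x}"

definition is_vector_norm :: "(real^'n \<Rightarrow> real) \<Rightarrow> bool" where
  "is_vector_norm nrm \<longleftrightarrow>
     (\<forall>x. 0 \<le> nrm x) \<and> (\<forall>x. nrm x = 0 \<longleftrightarrow> x = 0) \<and>
     (\<forall>c x. nrm (c *\<^sub>R x) = \<bar>c\<bar> * nrm x) \<and>
     (\<forall>x y. nrm (x + y) \<le> nrm x + nrm y)"

definition induced_norm :: "(real^'n \<Rightarrow> real) \<Rightarrow> real^'n^'n \<Rightarrow> real" where
  "induced_norm nrm M = (SUP x\<in>{x. nrm x = 1}. nrm (M *v x))"

end

theory Submission
  imports Defs
begin

text \<open>
  The error e = y - yt solves e' = -A e + \<epsilon> yt'' with e(0) = 0, so by variation of constants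
  e(t) is \<epsilon> times the integral over [0,t] of exp(-(t-s)A) yt''(s), while the integral of
  C exp(-\<omega>(t-s)) over [0,t] is C t \<phi>(-\<omega>t). Instead of integrating with respect to an
  arbitrary norm, we test against a norming functional a of e(t): the real function
  s \<mapsto> a \<bullet> exp(-(t-s)A) e(s) has derivative a \<bullet> exp(-(t-s)A) \<epsilon> yt''(s) \<le> C \<epsilon> M exp(-\<omega>(t-s)),
  with M the maximum of the norm of yt'' on [0,t], and the mean value theorem compares it with a
  primitive of this bound.
\<close>

text \<open>
  The matrix exponential is treated as the exponential of a Banach algebra. HOL-Analysis does
  not make the bounded operators \<open>'a \<Rightarrow>\<^sub>L 'a\<close> an algebra under composition, so they are
  copied into a type that is one.
\<close>

typedef (overloaded) 'a linop = "UNIV :: ('a::euclidean_space \<Rightarrow>\<^sub>L 'a) set"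
  morphisms blinfun_of_linop Linop
  by simp

lemma linop_eq_iff: "x = y \<longleftrightarrow> blinfun_of_linop x = blinfun_of_linop y"
  by (simp add: blinfun_of_linop_inject)

instantiation linop :: (euclidean_space) real_normed_algebra_1
begin

definition "0 = Linop 0"
definition "1 = Linop id_blinfun"
definition "x + y = Linop (blinfun_of_linop x + blinfun_of_linop y)"
definition "x - y = Linop (blinfun_of_linop x - blinfun_of_linop y)"
definition "- x = Linop (- blinfun_of_linop x)"
definition "r *\<^sub>R x = Linop (r *\<^sub>R blinfun_of_linop x)"
definition "x * y = Linop (blinfun_of_linop x o\<^sub>L blinfun_of_linop y)"
definition "norm x = norm (blinfun_of_linop x)"
definition "sgn x = inverse (norm x) *\<^sub>R (x :: 'a linop)"
definition "dist x y = norm (x - (y :: 'a linop))"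
definition "(uniformity :: ('a linop \<times> 'a linop) filter) =
  (INF e\<in>{0<..}. principal {(x, y). dist x y < e})"
definition "open (S :: 'a linop set) = (\<forall>x\<in>S. \<forall>\<^sub>F (x', y) in uniformity. x' = x \<longrightarrow> y \<in> S)"

lemma blinfun_of_linop_simps [simp]:
  "blinfun_of_linop 0 = 0" "blinfun_of_linop 1 = id_blinfun"
  "blinfun_of_linop (x + y) = blinfun_of_linop x + blinfun_of_linop y"
  "blinfun_of_linop (x - y) = blinfun_of_linop x - blinfun_of_linop y"
  "blinfun_of_linop (- x) = - blinfun_of_linop x"
  "blinfun_of_linop (r *\<^sub>R x) = r *\<^sub>R blinfun_of_linop x"
  "blinfun_of_linop (x * y) = blinfun_of_linop x o\<^sub>L blinfun_of_linop y"
  "norm x = norm (blinfun_of_linop x)"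
  by (simp_all add: zero_linop_def one_linop_def plus_linop_def minus_linop_def
      uminus_linop_def scaleR_linop_def times_linop_def norm_linop_def Linop_inverse)

instance
proof
  have "(id_blinfun :: 'a \<Rightarrow>\<^sub>L 'a) \<noteq> 0"
    by (metis norm_blinfun_id norm_zero zero_neq_one)
  then show "(0 :: 'a linop) \<noteq> 1"
    by (simp add: linop_eq_iff)
qed (auto simp: linop_eq_iff dist_linop_def sgn_linop_def uniformity_linop_def open_linop_def
    norm_blinfun_compose blinfun.bilinear_simps norm_triangle_ineq algebra_simps
    scaleR_blinfun.rep_eq plus_blinfun.rep_eq blinfun.scaleR_right intro!: blinfun_eqI)

end

lemma dist_blinfun_of_linop: "dist x y = dist (blinfun_of_linop x) (blinfun_of_linop y)"
  by (simp add: dist_linop_def dist_norm)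

instance linop :: (euclidean_space) banach
proof
  fix X :: "nat \<Rightarrow> 'a linop"
  assume "Cauchy X"
  then have "Cauchy (\<lambda>n. blinfun_of_linop (X n))"
    by (simp add: Cauchy_def dist_blinfun_of_linop)
  then obtain L where "(\<lambda>n. blinfun_of_linop (X n)) \<longlonglongrightarrow> L"
    using Cauchy_convergent_iff convergent_def by blast
  then have "X \<longlonglongrightarrow> Linop L"
    unfolding tendsto_iff dist_blinfun_of_linop by (simp add: Linop_inverse)
  then show "convergent X"
    by (auto simp: convergent_def)
qed

lemma bounded_linear_blinfun_of_linop: "bounded_linear blinfun_of_linop"
  by (rule bounded_linear_intro[where K = 1]) simp_all

lemma exp_scaleR_shifted_has_vector_derivative:
  fixes B :: "'a::{real_normed_algebra_1,banach}"
  shows "((\<lambda>s. exp ((s - t) *\<^sub>R B)) has_vector_derivative exp ((s - t) *\<^sub>R B) * B) (at s within S)"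
proof -
  have "((\<lambda>s. s - t) has_vector_derivative 1) (at s within S)"
    by (auto intro!: derivative_eq_intros simp flip: has_real_derivative_iff_has_vector_derivative)
  from vector_diff_chain_within[OF this exp_scaleR_has_vector_derivative_right]
  show ?thesis
    by (simp add: o_def)
qed

definition linop_of_matrix :: "real^'n^'n \<Rightarrow> (real^'n::finite) linop"
  where "linop_of_matrix A = Linop (Blinfun ((*v) A))"

definition matrix_of_linop :: "(real^'n::finite) linop \<Rightarrow> real^'n^'n"
  where "matrix_of_linop X = matrix (blinfun_apply (blinfun_of_linop X))"

lemma linop_of_matrix_apply [simp]: "blinfun_of_linop (linop_of_matrix A) x = A *v x"
  by (simp add: linop_of_matrix_def Linop_inverse bounded_linear_Blinfun_apply)

lemma matrix_of_linop_apply: "matrix_of_linop X *v x = blinfun_of_linop X x"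
  by (simp add: matrix_of_linop_def matrix_works blinfun.bounded_linear_right bounded_linear.linear)

lemma linop_of_matrix_scaleR: "linop_of_matrix (r *\<^sub>R A) = r *\<^sub>R linop_of_matrix A"
  by (simp add: linop_eq_iff blinfun_eqI scaleR_blinfun.rep_eq scaleR_matrix_vector_assoc)

lemma linop_of_matrix_zero [simp]: "linop_of_matrix 0 = 0"
  using linop_of_matrix_scaleR[of 0] by simp

lemma matrix_of_linop_power: "matrix_of_linop (linop_of_matrix A ^ k) = mat_pow A k"
proof -
  have "blinfun_of_linop (linop_of_matrix A ^ k) x = mat_pow A k *v x" for x
    by (induction k arbitrary: x) (simp_all add: matrix_vector_mul_assoc)
  then show ?thesis
    by (metis matrix_eq matrix_of_linop_apply)
qed

lemma matrix_of_linop_add: "matrix_of_linop (X + Y) = matrix_of_linop X + matrix_of_linop Y"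
  by (simp add: matrix_eq matrix_of_linop_apply matrix_vector_mult_add_rdistrib blinfun.add_left)

lemma matrix_of_linop_scaleR: "matrix_of_linop (r *\<^sub>R X) = r *\<^sub>R matrix_of_linop X"
  by (simp add: matrix_eq matrix_of_linop_apply scaleR_blinfun.rep_eq flip: scaleR_matrix_vector_assoc)

lemma bounded_linear_matrix_of_linop:
  "bounded_linear (matrix_of_linop :: (real^'n::finite) linop \<Rightarrow> _)"
proof (rule bounded_linear_intro[where K = "real CARD('n) * real CARD('n)"])
  fix X :: "(real^'n) linop"
  have entry: "\<bar>matrix_of_linop X $ i $ j\<bar> \<le> norm X" for i j
    unfolding matrix_of_linop_def norm_blinfun.rep_eq blinfun_of_linop_simps
    by (rule component_le_onorm) (simp add: blinfun.bounded_linear_right bounded_linear.linear)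
  have "norm (matrix_of_linop X) \<le> (\<Sum>i\<in>UNIV. norm (matrix_of_linop X $ i))"
    by (simp add: norm_vec_def L2_set_le_sum)
  also have "\<dots> \<le> (\<Sum>i\<in>(UNIV::'n set). \<Sum>j\<in>(UNIV::'n set). \<bar>matrix_of_linop X $ i $ j\<bar>)"
    by (intro sum_mono norm_le_l1_cart)
  also have "\<dots> \<le> (\<Sum>i\<in>(UNIV::'n set). \<Sum>j\<in>(UNIV::'n set). norm X)"
    by (intro sum_mono entry)
  finally show "norm (matrix_of_linop X) \<le> norm X * (real CARD('n) * real CARD('n))"
    by (simp add: algebra_simps)
qed (simp_all add: matrix_of_linop_add matrix_of_linop_scaleR)

lemma mat_exp_eq_matrix_of_exp: "mat_exp A = matrix_of_linop (exp (linop_of_matrix A))"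
proof -
  have "(\<lambda>k. linop_of_matrix A ^ k /\<^sub>R fact k) sums exp (linop_of_matrix A)"
    by (simp add: exp_def summable_exp_generic summable_sums)
  from bounded_linear.sums[OF bounded_linear_matrix_of_linop this]
  have "(\<lambda>k. (1 / fact k) *\<^sub>R mat_pow A k) sums matrix_of_linop (exp (linop_of_matrix A))"
    by (simp add: matrix_of_linop_scaleR matrix_of_linop_power
        divide_inverse_commute)
  then show ?thesis
    by (simp add: mat_exp_def sums_unique[symmetric])
qed

lemma mat_exp_apply: "mat_exp A *v x = blinfun_of_linop (exp (linop_of_matrix A)) x"
  by (simp add: mat_exp_eq_matrix_of_exp matrix_of_linop_apply)

lemma mat_exp_scaleR_mult_has_vector_derivative:
  fixes A :: "real^'n::finite^'n" and e :: "real \<Rightarrow> real^'n"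
  assumes "(e has_vector_derivative e') (at s within S)"
  shows "((\<lambda>s. mat_exp ((s - t) *\<^sub>R A) *v e s) has_vector_derivative
      mat_exp ((s - t) *\<^sub>R A) *v (e' + A *v e s)) (at s within S)"
proof -
  define B where "B = linop_of_matrix A"
  have "((\<lambda>s. blinfun_of_linop (exp ((s - t) *\<^sub>R B))) has_vector_derivative
      blinfun_of_linop (exp ((s - t) *\<^sub>R B)) o\<^sub>L blinfun_of_linop B) (at s within S)"
    using bounded_linear.has_vector_derivative[OF bounded_linear_blinfun_of_linop
        exp_scaleR_shifted_has_vector_derivative] by simp
  from blinfun.has_vector_derivative[OF this assms] show ?thesis
    by (simp add: B_def mat_exp_apply linop_of_matrix_scaleR blinfun.bilinear_simps)
qed

locale vector_norm =
  fixes nrm :: "real^'n::finite \<Rightarrow> real"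
  assumes is_vector_norm: "is_vector_norm nrm"
begin

lemma nrm_nonneg: "0 \<le> nrm x"
  and nrm_eq_0_iff: "nrm x = 0 \<longleftrightarrow> x = 0"
  and nrm_scaleR: "nrm (c *\<^sub>R x) = \<bar>c\<bar> * nrm x"
  and nrm_triangle: "nrm (x + y) \<le> nrm x + nrm y"
  using is_vector_norm by (simp_all add: is_vector_norm_def)

lemma nrm_zero [simp]: "nrm 0 = 0"
  by (simp add: nrm_eq_0_iff)

lemma nrm_pos: "x \<noteq> 0 \<Longrightarrow> 0 < nrm x"
  using nrm_eq_0_iff nrm_nonneg by (metis less_eq_real_def)

lemma nrm_sum: "nrm (sum f S) \<le> (\<Sum>i\<in>S. nrm (f i))"
proof (induction S rule: infinite_finite_induct)
  case (insert x F)
  then show ?case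
    using nrm_triangle[of "f x" "sum f F"] by simp
qed simp_all

lemma nrm_le_norm: "\<exists>K>0. \<forall>x. nrm x \<le> K * norm x"
proof -
  define K where "K = 1 + (\<Sum>i\<in>UNIV. nrm (axis i 1))"
  have "nrm x \<le> K * norm x" for x
  proof -
    have "x = (\<Sum>i\<in>UNIV. x $ i *\<^sub>R axis i 1)"
      using basis_expansion[of x] by (simp add: scalar_mult_eq_scaleR)
    then have "nrm x \<le> (\<Sum>i\<in>UNIV. nrm (x $ i *\<^sub>R axis i 1))"
      by (metis nrm_sum)
    also have "\<dots> \<le> (\<Sum>i\<in>UNIV. norm x * nrm (axis i 1))"
      by (intro sum_mono) (simp add: nrm_scaleR mult_right_mono nrm_nonneg component_le_norm_cart)
    also have "\<dots> \<le> K * norm x"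
      by (simp add: K_def sum_distrib_left algebra_simps)
    finally show ?thesis .
  qed
  moreover have "K > 0"
    by (simp add: K_def add_pos_nonneg sum_nonneg nrm_nonneg)
  ultimately show ?thesis
    by blast
qed

lemma continuous_on_nrm: "continuous_on S nrm"
proof -
  obtain K where "K > 0" and K: "\<And>x. nrm x \<le> K * norm x"
    using nrm_le_norm by blast
  have "\<bar>nrm x - nrm y\<bar> \<le> K * dist x y" for x y
    using nrm_triangle[of "x - y" y] nrm_triangle[of "y - x" x] K[of "x - y"] K[of "y - x"]
    by (simp add: dist_norm norm_minus_commute)
  then have "K-lipschitz_on S nrm"
    using \<open>K > 0\<close> by (intro lipschitz_onI) (auto simp: dist_real_def)
  then show ?thesis
    by (rule lipschitz_on_continuous_on)
qed

lemma norm_le_nrm: "\<exists>k>0. \<forall>x. k * norm x \<le> nrm x"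
proof -
  have "sphere (0::real^'n) 1 \<noteq> {}"
    by (metis empty_iff mem_sphere_0 norm_axis_1)
  from continuous_attains_inf[OF compact_sphere this continuous_on_nrm]
  obtain x0 where x0: "norm x0 = 1" and min: "\<And>y. norm y = 1 \<Longrightarrow> nrm x0 \<le> nrm y"
    by auto
  have "nrm x0 * norm x \<le> nrm x" for x
  proof (cases "x = 0")
    case False
    then have "nrm x0 \<le> nrm (x /\<^sub>R norm x)"
      by (intro min) simp
    then show ?thesis
      using False by (simp add: nrm_scaleR field_simps)
  qed simp
  moreover have "nrm x0 > 0"
    using x0 by (intro nrm_pos) auto
  ultimately show ?thesis
    by blast
qed

lemma induced_norm_bound: "nrm (M *v x) \<le> induced_norm nrm M * nrm x"
proof (cases "x = 0")
  case False
  obtain K where K: "K > 0" "\<And>x. nrm x \<le> K * norm x"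
    using nrm_le_norm by blast
  obtain k where k: "k > 0" "\<And>x. k * norm x \<le> nrm x"
    using norm_le_nrm by blast
  obtain B where B: "\<And>x. norm (M *v x) \<le> norm x * B" and "B > 0"
    using bounded_linear.pos_bounded[OF matrix_vector_mul_bounded_linear] by blast
  have "nrm (M *v u) \<le> K * (B / k)" if "nrm u = 1" for u
  proof -
    have "norm u \<le> 1 / k"
      using k(1) k(2)[of u] that by (simp add: field_simps)
    then have "norm (M *v u) \<le> B / k"
      using B[of u] mult_right_mono[of "norm u" "1 / k" B] \<open>B > 0\<close> by simp
    then show ?thesis
      using K(2)[of "M *v u"] mult_left_mono[of "norm (M *v u)" "B / k" K] K(1) by simp
  qed
  then have bdd: "bdd_above ((\<lambda>u. nrm (M *v u)) ` {u. nrm u = 1})"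
    by (intro bdd_aboveI2) auto
  have "nrm (x /\<^sub>R nrm x) = 1"
    using nrm_pos[OF False] by (simp add: nrm_scaleR)
  then have "nrm (M *v (x /\<^sub>R nrm x)) \<le> induced_norm nrm M"
    unfolding induced_norm_def using bdd by (intro cSUP_upper) auto
  then show ?thesis
    using nrm_pos[OF False] by (simp add: matrix_vector_mult_scaleR nrm_scaleR field_simps)
qed simp

lemma induced_norm_nonneg: "0 \<le> induced_norm nrm M"
proof -
  have "0 < nrm (axis undefined 1)"
    by (simp add: nrm_pos)
  moreover have "0 \<le> induced_norm nrm M * nrm (axis undefined 1)"
    using nrm_nonneg order_trans induced_norm_bound by blast
  ultimately show ?thesis
    by (simp add: zero_le_mult_iff)
qed

lemma convex_nrm_ball: "convex {z. nrm z < r}"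
proof (rule convexI)
  fix x y and u v :: real
  assume "x \<in> {z. nrm z < r}" "y \<in> {z. nrm z < r}" "0 \<le> u" "0 \<le> v" "u + v = 1"
  then have "nrm (u *\<^sub>R x + v *\<^sub>R y) \<le> u * nrm x + v * nrm y"
    using nrm_triangle[of "u *\<^sub>R x" "v *\<^sub>R y"] by (simp add: nrm_scaleR)
  also have "\<dots> \<le> u * max (nrm x) (nrm y) + v * max (nrm x) (nrm y)"
    using \<open>0 \<le> u\<close> \<open>0 \<le> v\<close> by (intro add_mono mult_left_mono) auto
  also have "\<dots> = max (nrm x) (nrm y)"
    using \<open>u + v = 1\<close> by (metis distrib_right mult_1)
  also have "\<dots> < r"
    using \<open>x \<in> _\<close> \<open>y \<in> _\<close> by simp
  finally show "u *\<^sub>R x + v *\<^sub>R y \<in> {z. nrm z < r}"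
    by simp
qed

lemma supporting_hyperplane_nrm_ball:
  assumes "v \<noteq> 0"
  obtains b where "b \<noteq> 0" and "\<And>z. nrm z < nrm v \<Longrightarrow> b \<bullet> z \<le> b \<bullet> v"
proof -
  have "convex ((\<lambda>z. z - v) ` {z. nrm z < nrm v})"
    by (intro convex_translation_subtract convex_nrm_ball)
  moreover have "0 \<notin> (\<lambda>z. z - v) ` {z. nrm z < nrm v}"
    by (simp add: image_iff)
  ultimately obtain a where "a \<noteq> 0" and a: "\<forall>x\<in>(\<lambda>z. z - v) ` {z. nrm z < nrm v}. 0 \<le> a \<bullet> x"
    by (metis separating_hyperplane_set_0)
  show ?thesis
  proof (rule that[of "- a"])
    show "- a \<noteq> 0"
      using \<open>a \<noteq> 0\<close> by simp
    show "- a \<bullet> z \<le> - a \<bullet> v" if "nrm z < nrm v" for z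
      using a that by (simp add: inner_diff_right)
  qed
qed

lemma norming_functional:
  obtains a where "a \<bullet> v = nrm v" and "\<And>w. a \<bullet> w \<le> nrm w"
proof (cases "v = 0")
  case True
  then show ?thesis
    using that[of 0] by (simp add: nrm_nonneg)
next
  case False
  obtain b where "b \<noteq> 0" and b: "\<And>z. nrm z < nrm v \<Longrightarrow> b \<bullet> z \<le> b \<bullet> v"
    using supporting_hyperplane_nrm_ball[OF False] by blast
  have "0 < b \<bullet> v"
  proof -
    define r where "r = nrm v / (2 * nrm b)"
    have "0 < r"
      using False \<open>b \<noteq> 0\<close> by (simp add: r_def nrm_pos)
    moreover have "nrm (r *\<^sub>R b) = nrm v / 2"
      using nrm_pos[OF \<open>b \<noteq> 0\<close>] by (simp add: nrm_scaleR r_def nrm_nonneg)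
    then have "r * (b \<bullet> b) \<le> b \<bullet> v"
      using b[of "r *\<^sub>R b"] nrm_pos[OF False] by simp
    ultimately show ?thesis
      using \<open>b \<noteq> 0\<close> by (meson inner_gt_zero_iff mult_pos_pos order_less_le_trans)
  qed
  have scaled: "nrm v * (b \<bullet> w) \<le> nrm w * (b \<bullet> v)" for w
  proof (cases "w = 0")
    case False
    have "(nrm v / nrm w) * (b \<bullet> w) \<le> b \<bullet> v"
    proof (rule field_le_mult_one_interval)
      fix c :: real
      assume "0 < c" "c < 1"
      then have "nrm ((c * (nrm v / nrm w)) *\<^sub>R w) < nrm v"
        using nrm_pos[OF False] nrm_pos[OF \<open>v \<noteq> 0\<close>] by (simp add: nrm_scaleR)
      then have "b \<bullet> ((c * (nrm v / nrm w)) *\<^sub>R w) \<le> b \<bullet> v"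
        by (rule b)
      then show "c * (nrm v / nrm w * (b \<bullet> w)) \<le> b \<bullet> v"
        by (simp add: mult.assoc)
    qed
    then show ?thesis
      using nrm_pos[OF False] by (simp add: field_simps)
  qed simp
  show ?thesis
  proof (rule that[of "(nrm v / (b \<bullet> v)) *\<^sub>R b"])
    show "(nrm v / (b \<bullet> v)) *\<^sub>R b \<bullet> v = nrm v"
      using \<open>0 < b \<bullet> v\<close> by simp
    show "(nrm v / (b \<bullet> v)) *\<^sub>R b \<bullet> w \<le> nrm w" for w
      using scaled[of w] \<open>0 < b \<bullet> v\<close> by (simp add: field_simps)
  qed
qed

end

lemma has_real_derivative_le_imp_diff_le:
  fixes f g :: "real \<Rightarrow> real"
  assumes "a \<le> b"
    and f: "\<And>x. x \<in> {a..b} \<Longrightarrow> (f has_real_derivative f' x) (at x within {a..b})"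
    and g: "\<And>x. x \<in> {a..b} \<Longrightarrow> (g has_real_derivative g' x) (at x within {a..b})"
    and le: "\<And>x. x \<in> {a..b} \<Longrightarrow> f' x \<le> g' x"
  shows "f b - f a \<le> g b - g a"
proof (cases "a = b")
  case False
  have "((\<lambda>x. f x - g x) has_derivative (\<lambda>h. (f' x - g' x) * h)) (at x within {a..b})"
    if "a \<le> x" "x \<le> b" for x
    using DERIV_diff[OF f g] that by (simp add: has_field_derivative_def)
  from mvt_simple[OF _ this] obtain \<xi> where "\<xi> \<in> {a<..<b}"
    and "f b - g b - (f a - g a) = (f' \<xi> - g' \<xi>) * (b - a)"
    using \<open>a \<le> b\<close> False by force
  moreover have "(f' \<xi> - g' \<xi>) * (b - a) \<le> 0"
    using le[of \<xi>] \<open>\<xi> \<in> _\<close> \<open>a \<le> b\<close> by (intro mult_nonpos_nonneg) auto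
  ultimately show ?thesis
    by simp
qed simp

lemma has_real_derivative_times_phi:
  "((\<lambda>\<tau>. \<tau> * phi (- \<omega> * \<tau>)) has_real_derivative exp (- \<omega> * \<tau>)) (at \<tau> within S)"
proof (cases "\<omega> = 0")
  case True
  then show ?thesis
    by (auto simp: phi_def intro!: derivative_eq_intros)
next
  case False
  then have "(\<lambda>\<tau>. \<tau> * phi (- \<omega> * \<tau>)) = (\<lambda>\<tau>. (1 - exp (- \<omega> * \<tau>)) / \<omega>)"
    by (auto simp: phi_def field_simps)
  with False show ?thesis
    by (auto intro!: derivative_eq_intros)
qed

lemma (in vector_norm) linear_ode_perturbation_bound:
  fixes A :: "real^'n^'n" and e r :: "real \<Rightarrow> real^'n"
  assumes "0 \<le> t"
    and e_ode: "\<And>s. s \<in> {0..t} \<Longrightarrow>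
      (e has_vector_derivative - (A *v e s) + r s) (at s within {0..t})"
    and "e 0 = 0"
    and r_le: "\<And>s. s \<in> {0..t} \<Longrightarrow> nrm (r s) \<le> R"
    and exp_le: "\<And>\<tau>. 0 \<le> \<tau> \<Longrightarrow> induced_norm nrm (mat_exp ((- \<tau>) *\<^sub>R A)) \<le> C * exp (- \<omega> * \<tau>)"
  shows "nrm (e t) \<le> C * R * (t * phi (- \<omega> * t))"
proof -
  obtain a where a_et: "a \<bullet> e t = nrm (e t)" and a_le: "\<And>w. a \<bullet> w \<le> nrm w"
    using norming_functional by blast
  have hd: "((\<lambda>s. a \<bullet> (mat_exp ((s - t) *\<^sub>R A) *v e s)) has_real_derivative
      a \<bullet> (mat_exp ((s - t) *\<^sub>R A) *v r s)) (at s within {0..t})" if "s \<in> {0..t}" for s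
    using bounded_linear.has_vector_derivative[OF bounded_linear_inner_right[of a]
        mat_exp_scaleR_mult_has_vector_derivative[where t = t and A = A, OF e_ode[OF that]]]
    by (simp add: has_real_derivative_iff_has_vector_derivative)
  define G where "G s = - C * R * ((t - s) * phi (- \<omega> * (t - s)))" for s
  have Gd: "(G has_real_derivative C * R * exp (- \<omega> * (t - s))) (at s within {0..t})"
    if "s \<in> {0..t}" for s
  proof -
    have "((\<lambda>s. t - s) has_real_derivative - 1) (at s within {0..t})"
      by (auto intro!: derivative_eq_intros)
    from DERIV_cmult[OF DERIV_chain2[OF has_real_derivative_times_phi[of \<omega>] this], of "- C * R"]
    show ?thesis
      unfolding G_def by (simp add: mult.assoc)
  qed
  have bound: "a \<bullet> (mat_exp ((s - t) *\<^sub>R A) *v r s) \<le> C * R * exp (- \<omega> * (t - s))"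
    if "s \<in> {0..t}" for s
  proof -
    have exp_bound: "induced_norm nrm (mat_exp ((s - t) *\<^sub>R A)) \<le> C * exp (- \<omega> * (t - s))"
      using that exp_le[of "t - s"] by simp
    have "a \<bullet> (mat_exp ((s - t) *\<^sub>R A) *v r s) \<le> induced_norm nrm (mat_exp ((s - t) *\<^sub>R A)) * nrm (r s)"
      using a_le induced_norm_bound order_trans by blast
    also have "\<dots> \<le> C * exp (- \<omega> * (t - s)) * R"
      using exp_bound induced_norm_nonneg order_trans
      by (intro mult_mono exp_bound r_le that nrm_nonneg) blast
    finally show ?thesis
      by (simp only: ac_simps)
  qed
  from has_real_derivative_le_imp_diff_le[OF \<open>0 \<le> t\<close> hd Gd bound]
  have "a \<bullet> (mat_exp ((t - t) *\<^sub>R A) *v e t) - a \<bullet> (mat_exp ((0 - t) *\<^sub>R A) *v e 0) \<le> G t - G 0" .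
  then show ?thesis
    using a_et \<open>e 0 = 0\<close> by (simp add: G_def mat_exp_apply)
qed

lemma hm_second_derivative_continuous_on:
  fixes A :: "real^'n^'n" and f u u' u'' :: "real \<Rightarrow> real^'n"
  assumes "\<epsilon> \<noteq> 0" and "continuous_on S f"
    and u_deriv: "\<And>s. s \<in> S \<Longrightarrow> (u has_vector_derivative u' s) (at s within S)"
    and u'_deriv: "\<And>s. s \<in> S \<Longrightarrow> (u' has_vector_derivative u'' s) (at s within S)"
    and hm: "\<And>s. s \<in> S \<Longrightarrow> u' s + \<epsilon> *\<^sub>R u'' s = - (A *v u s) + f s"
  shows "continuous_on S u''"
proof -
  have "continuous_on S u" "continuous_on S u'"
    using u_deriv u'_deriv by (auto intro!: continuous_on_vector_derivative)
  then have "continuous_on S (\<lambda>s. (1 / \<epsilon>) *\<^sub>R (- (A *v u s) + f s - u' s))"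
    by (intro continuous_intros \<open>continuous_on S f\<close>
        bounded_linear.continuous_on[OF matrix_vector_mul_bounded_linear])
  moreover have "(1 / \<epsilon>) *\<^sub>R (- (A *v u s) + f s - u' s) = u'' s" if "s \<in> S" for s
  proof -
    have "\<epsilon> *\<^sub>R u'' s = - (A *v u s) + f s - u' s"
      using hm[OF that] by (metis add_diff_cancel_left')
    then have "(1 / \<epsilon>) *\<^sub>R (\<epsilon> *\<^sub>R u'' s) = (1 / \<epsilon>) *\<^sub>R (- (A *v u s) + f s - u' s)"
      by simp
    then show ?thesis
      using \<open>\<epsilon> \<noteq> 0\<close> by simp
  qed
  ultimately show ?thesis
    by (rule continuous_on_eq)
qed

lemma hm_error_has_vector_derivative:
  fixes A :: "real^'n^'n" and y u u' u'' :: "real \<Rightarrow> real^'n"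
  assumes "(y has_vector_derivative - (A *v y s) + f s) (at s within S)"
    and "(u has_vector_derivative u' s) (at s within S)"
    and "u' s + \<epsilon> *\<^sub>R u'' s = - (A *v u s) + f s"
  shows "((\<lambda>s. y s - u s) has_vector_derivative - (A *v (y s - u s)) + \<epsilon> *\<^sub>R u'' s) (at s within S)"
proof -
  have "(- (A *v y s) + f s) - u' s = - (A *v (y s - u s)) + \<epsilon> *\<^sub>R u'' s"
    using assms(3) by (auto simp: algebra_simps matrix_vector_mult_diff_distrib)
  with has_vector_derivative_diff[OF assms(1,2)] show ?thesis
    by simp
qed

theorem proposition1:
  fixes A :: "real^'n^'n" and \<omega> T \<epsilon> C :: real
    and f y yt yt' yt'' :: "real \<Rightarrow> real^'n"
    and y0 v0 :: "real^'n" and nrm :: "real^'n \<Rightarrow> real"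
  assumes symA: "transpose A = A"
    and psdA: "\<forall>x. 0 \<le> x \<bullet> (A *v x)"
    and omega_eig: "\<omega> \<in> mat_eigenvalues A"
    and omega_min: "\<forall>l\<in>mat_eigenvalues A. \<omega> \<le> l"
    and f_cont: "continuous_on {0..T} f"
    and eps: "\<epsilon> > 0"
    and y_ode: "\<forall>t\<in>{0..T}. (y has_vector_derivative (- (A *v y t) + f t)) (at t within {0..T})"
    and y_init: "y 0 = y0"
    and yt_d1: "\<forall>t\<in>{0..T}. (yt has_vector_derivative yt' t) (at t within {0..T})"
    and yt_d2: "\<forall>t\<in>{0..T}. (yt' has_vector_derivative yt'' t) (at t within {0..T})"
    and yt_ode: "\<forall>t\<in>{0..T}. yt' t + \<epsilon> *\<^sub>R yt'' t = - (A *v yt t) + f t"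
    and yt_init: "yt 0 = y0" "yt' 0 = v0"
    and nrm: "is_vector_norm nrm"
    and C_bound: "\<forall>t\<ge>0. induced_norm nrm (mat_exp ((- t) *\<^sub>R A)) \<le> C * exp (- \<omega> * t)"
  shows "\<forall>t\<in>{0..T}. nrm (y t - yt t)
           \<le> C * \<epsilon> * t * phi (- \<omega> * t) * (SUP s\<in>{0..t}. nrm (yt'' s))"
proof
  fix t
  assume t: "t \<in> {0..T}"
  then have sub: "{0..t} \<subseteq> {0..T}"
    by auto
  interpret vector_norm nrm
    by (fact vector_norm.intro[OF nrm])
  have "continuous_on {0..T} yt''"
    using eps yt_d1 yt_d2 yt_ode
    by (intro hm_second_derivative_continuous_on[where \<epsilon> = \<epsilon> and A = A and u = yt and u' = yt',
          OF _ f_cont]) simp_all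
  then have "continuous_on {0..t} (\<lambda>s. nrm (yt'' s))"
    by (intro continuous_on_compose2[OF continuous_on_nrm] continuous_on_subset[OF _ sub]) auto
  then have yt''_le: "nrm (yt'' s) \<le> (SUP s\<in>{0..t}. nrm (yt'' s))" if "s \<in> {0..t}" for s
    using that by (intro cSUP_upper bounded_imp_bdd_above compact_imp_bounded compact_continuous_image) auto
  have e_ode: "((\<lambda>s. y s - yt s) has_vector_derivative - (A *v (y s - yt s)) + \<epsilon> *\<^sub>R yt'' s)
      (at s within {0..t})" if "s \<in> {0..t}" for s
  proof -
    have s: "s \<in> {0..T}"
      using that sub by auto
    from y_ode[rule_format, OF s] yt_d1[rule_format, OF s] yt_ode[rule_format, OF s]
    show ?thesis
      by (intro has_vector_derivative_within_subset[OF hm_error_has_vector_derivative sub])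
  qed
  have "nrm (y t - yt t) \<le> C * (\<epsilon> * (SUP s\<in>{0..t}. nrm (yt'' s))) * (t * phi (- \<omega> * t))"
  proof (rule linear_ode_perturbation_bound[OF _ e_ode])
    show "0 \<le> t" "y 0 - yt 0 = 0"
      using t y_init yt_init by auto
    show "nrm (\<epsilon> *\<^sub>R yt'' s) \<le> \<epsilon> * (SUP s\<in>{0..t}. nrm (yt'' s))" if "s \<in> {0..t}" for s
      using yt''_le[OF that] eps by (simp add: nrm_scaleR)
    show "induced_norm nrm (mat_exp ((- \<tau>) *\<^sub>R A)) \<le> C * exp (- \<omega> * \<tau>)" if "0 \<le> \<tau>" for \<tau>
      using C_bound that by simp
  qed
  then show "nrm (y t - yt t) \<le> C * \<epsilon> * t * phi (- \<omega> * t) * (SUP s\<in>{0..t}. nrm (yt'' s))"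
    by (simp only: ac_simps)
qed

end
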